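(* Let $\theta_N=1+N^{-2/3}w_N$ where $w_N>0$, $(\log\log N)^2/w_N\to0$ and $w_N/(\log N)^2\to0$. For $1\le i\le N$ let $r_i=1+\sqrt{1-\frac{i-1}{N\theta_N^2}}$, $m_i=1-\sqrt{1-\frac{i-1}{N\theta_N^2}}$, $\gamma_i=m_i/r_i$, and $g_i=1+\gamma_i+\gamma_i\gamma_{i+1}+\dots+\gamma_i\gamma_{i+1}\cdots\gamma_N$. Then for every $k>0$, for all sufficiently large $N$ and all $3\le i\le N-N^{1/3}$, \[ g_i>\frac{r_i}{2(r_i-1)}\big(1-\log^{-k}N\big); \] and for all sufficiently large $N$ and all $3\le i\le N$, \[ g_i<\frac{r_i}{2(r_i-1)}\big(1+w_N^{-3/2}\big). \] *)

theory Defs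
  imports Complex_Main
begin

definition theta :: "(nat \<Rightarrow> real) \<Rightarrow> nat \<Rightarrow> real" where
  "theta w N = 1 + real N powr (-2/3) * w N"

definition rr :: "(nat \<Rightarrow> real) \<Rightarrow> nat \<Rightarrow> nat \<Rightarrow> real" where
  "rr w N i = 1 + sqrt (1 - (real i - 1) / (real N * (theta w N)^2))"

definition mm :: "(nat \<Rightarrow> real) \<Rightarrow> nat \<Rightarrow> nat \<Rightarrow> real" where
  "mm w N i = 1 - sqrt (1 - (real i - 1) / (real N * (theta w N)^2))"

definition gam :: "(nat \<Rightarrow> real) \<Rightarrow> nat \<Rightarrow> nat \<Rightarrow> real" where
  "gam w N i = mm w N i / rr w N i"

text \<open>g_i = 1 + gamma_i + gamma_i gamma_(i+1) + ... + gamma_i ... gamma_N;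
  the term with index j is the product of gamma_l for l from i to j-1,
  j ranging over i..N+1 (j = i gives the empty product 1).\<close>
definition gg :: "(nat \<Rightarrow> real) \<Rightarrow> nat \<Rightarrow> nat \<Rightarrow> real" where
  "gg w N i = (\<Sum>j = i..N+1. \<Prod>l = i..<j. gam w N l)"

end

theory Submission
  imports Defs "HOL-Real_Asymp.Real_Asymp"
begin

(*
  Write s_i = sqrt (1 - (i - 1) / (N theta^2)) (gap w N i below), so that r_i = 1 + s_i,
  gamma_i = (1 - s_i) / (1 + s_i) and f_i := r_i / (2 (r_i - 1)) = (1 + s_i) / (2 s_i) = 1 / (1 - gamma_i),
  while g_i = 1 + gamma_i g_(i+1) and g_(N+1) = 1.

  Lower bound: s_i decreases in i, so gamma_i increases and g_i dominates the geometric sum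
  f_i (1 - gamma_i^(N+2-i)). Moreover gamma_i <= exp (-sigma) with sigma = s_(N+1) = sqrt (1 - theta^-2),
  and sigma N^(1/3) >= sqrt w_N; for N + 2 - i >= N^(1/3) the defect is thus at most exp (- sqrt w_N),
  which is eventually below any power log^-k N.

  Upper bound: f_i / (1 - delta) is a supersolution of the recursion as soon as f_(i+1) - f_i <= delta.
  As s_i^2 drops by exactly 1 / (N theta^2) per step, this holds with delta = 1 / (4 N theta^2 sigma^3),
  which is at most w_N^(-3/2) / 3, and comparison gives g_i <= f_i / (1 - delta).
*)

lemma sum_prod_tail_rec:
  fixes c :: "nat \<Rightarrow> 'a::comm_semiring_1"
  assumes "i < n"
  shows "(\<Sum>j=i..n. \<Prod>l=i..<j. c l) = 1 + c i * (\<Sum>j=Suc i..n. \<Prod>l=Suc i..<j. c l)"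
proof -
  have "(\<Sum>j=i..n. \<Prod>l=i..<j. c l) = 1 + (\<Sum>j=Suc i..n. \<Prod>l=i..<j. c l)"
    using assms by (simp add: sum.atLeast_Suc_atMost)
  also have "(\<Sum>j=Suc i..n. \<Prod>l=i..<j. c l) = (\<Sum>j=Suc i..n. c i * (\<Prod>l=Suc i..<j. c l))"
    by (intro sum.cong refl) (simp add: prod.atLeast_Suc_lessThan)
  finally show ?thesis
    by (simp add: sum_distrib_left)
qed

lemma sum_prod_le_supersolution:
  fixes c F :: "nat \<Rightarrow> real"
  assumes "i \<le> n" and "1 \<le> F n"
    and super: "\<And>l. i \<le> l \<Longrightarrow> l < n \<Longrightarrow> 0 \<le> c l \<and> 1 + c l * F (Suc l) \<le> F l"
  shows "(\<Sum>j=i..n. \<Prod>l=i..<j. c l) \<le> F i"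
proof -
  have "(\<Sum>j=m..n. \<Prod>l=m..<j. c l) \<le> F m" if "m \<le> n" "i \<le> m" for m
    using that
  proof (induction m rule: inc_induct)
    case base
    then show ?case
      using \<open>1 \<le> F n\<close> by simp
  next
    case (step m)
    then have c: "0 \<le> c m" "1 + c m * F (Suc m) \<le> F m"
      using super by auto
    have "(\<Sum>j=m..n. \<Prod>l=m..<j. c l) = 1 + c m * (\<Sum>j=Suc m..n. \<Prod>l=Suc m..<j. c l)"
      using \<open>m < n\<close> by (rule sum_prod_tail_rec)
    also have "\<dots> \<le> 1 + c m * F (Suc m)"
      using step c(1) by (simp add: mult_left_mono)
    finally show ?case
      using c(2) by linarith
  qed
  then show ?thesis
    using assms(1) by simp
qed

lemma sum_prod_ge_geometric:
  fixes c :: "nat \<Rightarrow> real"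
  assumes "i \<le> n" "0 \<le> c i" "c i \<noteq> 1"
    and mono: "\<And>l. i \<le> l \<Longrightarrow> l < n \<Longrightarrow> c i \<le> c l"
  shows "(1 - c i ^ (n + 1 - i)) / (1 - c i) \<le> (\<Sum>j=i..n. \<Prod>l=i..<j. c l)"
proof -
  have "(1 - c i ^ (n + 1 - i)) / (1 - c i) = (\<Sum>t<n + 1 - i. c i ^ t)"
    using assms(3) by (simp add: sum_gp_strict)
  also have "\<dots> = (\<Sum>j=i..n. c i ^ (j - i))"
    using assms(1) by (subst sum.atLeastAtMost_shift_0) (auto intro!: sum.cong)
  also have "\<dots> \<le> (\<Sum>j=i..n. \<Prod>l=i..<j. c l)"
  proof (intro sum_mono)
    fix j assume "j \<in> {i..n}"
    then have "(\<Prod>l=i..<j. c i) \<le> (\<Prod>l=i..<j. c l)"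
      using assms(2) mono by (intro prod_mono) auto
    then show "c i ^ (j - i) \<le> (\<Prod>l=i..<j. c l)" by simp
  qed
  finally show ?thesis .
qed

lemma one_minus_div_one_plus_le_exp:
  fixes s :: real
  assumes "0 \<le> s"
  shows "(1 - s) / (1 + s) \<le> exp (- s)"
proof (cases "s \<le> 1")
  case True
  have "(1 - s) * 1 \<le> (1 - s) * (1 + s)"
    using assms True by (intro mult_left_mono) auto
  then have "(1 - s) / (1 + s) \<le> 1 - s"
    using assms by (subst pos_divide_le_eq) auto
  also have "\<dots> \<le> exp (- s)"
    using exp_ge_add_one_self[of "- s"] by simp
  finally show ?thesis .
next
  case False
  then have "(1 - s) / (1 + s) \<le> 0"
    by (intro divide_nonpos_pos) auto
  then show ?thesis
    using exp_gt_zero[of "- s"] by linarith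
qed

lemma one_minus_div_one_plus_antimono:
  fixes s t :: real
  assumes "0 \<le> t" "t \<le> s"
  shows "(1 - s) / (1 + s) \<le> (1 - t) / (1 + t)"
  using assms by (simp add: field_simps)

lemma one_plus_div_double_eq:
  fixes s :: real
  assumes "0 < s"
  shows "(1 + s) / (2 * s) = 1 + (1 - s) / (1 + s) * ((1 + s) / (2 * s))"
proof -
  have "(1 - s) / (1 + s) * ((1 + s) / (2 * s)) = (1 - s) / (2 * s)"
    using assms by simp
  then show ?thesis
    using assms by (simp add: field_simps)
qed

lemma one_plus_div_double_antimono:
  fixes s s' :: real
  assumes "0 < s'" "s' \<le> s"
  shows "(1 + s) / (2 * s) \<le> (1 + s') / (2 * s')"
  using assms by (simp add: field_simps)

lemma one_plus_div_double_diff_le: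
  fixes s s' \<sigma> :: real
  assumes "0 < \<sigma>" "\<sigma> \<le> s'" "s' \<le> s"
  shows "(1 + s') / (2 * s') - (1 + s) / (2 * s) \<le> (s\<^sup>2 - s'\<^sup>2) / (4 * \<sigma> ^ 3)"
proof -
  have pos: "0 < s'" "0 < s"
    using assms by linarith+
  have "(1 + s') / (2 * s') - (1 + s) / (2 * s) = (s - s') / (2 * (s * s'))"
    using pos by (simp add: field_simps)
  also have "\<dots> = (s\<^sup>2 - s'\<^sup>2) / (2 * (s * s' * (s + s')))"
    using pos by (simp add: power2_eq_square square_diff_square_factored)
  also have "\<dots> \<le> (s\<^sup>2 - s'\<^sup>2) / (2 * (\<sigma> * \<sigma> * (\<sigma> + \<sigma>)))"
  proof (rule divide_left_mono)
    show "0 \<le> s\<^sup>2 - s'\<^sup>2"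
      using assms by (simp add: power_mono)
    show "2 * (\<sigma> * \<sigma> * (\<sigma> + \<sigma>)) \<le> 2 * (s * s' * (s + s'))"
      using assms by (intro mult_left_mono mult_mono add_mono) auto
    show "0 < 2 * (s * s' * (s + s')) * (2 * (\<sigma> * \<sigma> * (\<sigma> + \<sigma>)))"
      using assms pos by simp
  qed
  also have "\<dots> = (s\<^sup>2 - s'\<^sup>2) / (4 * \<sigma> ^ 3)"
    by (simp add: power3_eq_cube algebra_simps)
  finally show ?thesis .
qed

lemma supersolution_step:
  fixes \<gamma> f f' \<delta> :: real
  assumes "f = 1 + \<gamma> * f" "0 \<le> \<gamma>" "\<gamma> \<le> 1" "0 \<le> f' - f" "f' - f \<le> \<delta>" "\<delta> < 1"
  shows "1 + \<gamma> * (f' / (1 - \<delta>)) \<le> f / (1 - \<delta>)"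
proof -
  have "\<gamma> * (f' - f) \<le> \<delta>"
    using mult_left_le_one_le[of "f' - f" \<gamma>] assms by linarith
  then have "1 - \<delta> + \<gamma> * f' \<le> f"
    using assms(1) by (simp add: algebra_simps)
  then have "(1 - \<delta> + \<gamma> * f') / (1 - \<delta>) \<le> f / (1 - \<delta>)"
    using assms(6) by (intro divide_right_mono) auto
  moreover have "(1 - \<delta> + \<gamma> * f') / (1 - \<delta>) = 1 + \<gamma> * (f' / (1 - \<delta>))"
    using assms(6) by (simp add: add_divide_distrib)
  ultimately show ?thesis
    by simp
qed

lemma le_one_minus_inverse_sq:
  fixes x :: real
  assumes "0 \<le> x" "x \<le> 1/2"
  shows "x \<le> 1 - 1 / (1 + x)\<^sup>2"
proof -
  have "x * x \<le> (1/2) * (1/2)"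
    using assms by (intro mult_mono) auto
  then have "x * (x + x * x) \<le> x * 1"
    using assms by (intro mult_left_mono) auto
  then have "x * (1 + x)\<^sup>2 \<le> (1 + x)\<^sup>2 - 1"
    by (simp add: power2_eq_square algebra_simps)
  then show ?thesis
    using assms by (simp add: field_simps)
qed

lemma one_plus_sq_sqrt_cube_bound:
  fixes x :: real
  assumes "0 < x"
  shows "1 / ((1 + x)\<^sup>2 * (4 * sqrt (1 - 1 / (1 + x)\<^sup>2) ^ 3)) \<le> x powr (-3/2) / 3"
proof -
  define r where "r = sqrt (x * (2 + x))"
  have r_pos: "0 < r" and r_ge: "sqrt x \<le> r"
    using assms by (simp_all add: r_def real_sqrt_le_mono)
  have "r\<^sup>2 = (1 + x)\<^sup>2 - 1"
    using assms by (simp add: r_def power2_eq_square algebra_simps)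
  moreover have "(1 + x)\<^sup>2 \<noteq> 0"
    using assms by simp
  ultimately have "1 - 1 / (1 + x)\<^sup>2 = (r / (1 + x))\<^sup>2"
    by (simp add: power_divide diff_divide_distrib)
  then have "sqrt (1 - 1 / (1 + x)\<^sup>2) = r / (1 + x)"
    using assms r_pos by simp
  moreover have "(1 + x) \<noteq> 0" "r \<noteq> 0"
    using assms r_pos by simp_all
  ultimately have lhs: "1 / ((1 + x)\<^sup>2 * (4 * sqrt (1 - 1 / (1 + x)\<^sup>2) ^ 3)) = (1 + x) / (4 * r ^ 3)"
    by (simp add: power_divide power2_eq_square power3_eq_cube)
  have "x powr (3/2) = x * sqrt x"
    using assms powr_add[of x 1 "1/2"] by (simp add: powr_half_sqrt)
  then have rhs: "x powr (-3/2) = 1 / (x * sqrt x)"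
    using assms by (simp add: powr_minus_divide)
  have "3 * (1 + x) * x * sqrt x \<le> 4 * (x * (2 + x)) * sqrt x"
    using assms by (intro mult_right_mono) (simp_all add: algebra_simps)
  also have "\<dots> \<le> 4 * (x * (2 + x)) * r"
    using assms r_ge by (intro mult_left_mono) auto
  also have "\<dots> = 4 * r ^ 3"
    using assms by (simp add: r_def power3_eq_cube)
  finally have "3 * (1 + x) * x * sqrt x \<le> 4 * r ^ 3" .
  moreover have "0 < x * sqrt x"
    using assms by simp
  ultimately show ?thesis
    unfolding lhs rhs using r_pos by (simp add: divide_simps mult.commute mult.left_commute)
qed

definition gap :: "(nat \<Rightarrow> real) \<Rightarrow> nat \<Rightarrow> nat \<Rightarrow> real" where
  "gap w N i = sqrt (1 - (real i - 1) / (real N * (theta w N)\<^sup>2))"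

definition gap_min :: "(nat \<Rightarrow> real) \<Rightarrow> nat \<Rightarrow> real" where
  "gap_min w N = sqrt (1 - 1 / (theta w N)\<^sup>2)"

lemma rr_div_eq: "rr w N i / (2 * (rr w N i - 1)) = (1 + gap w N i) / (2 * gap w N i)"
  by (simp add: rr_def gap_def)

lemma gam_eq: "gam w N i = (1 - gap w N i) / (1 + gap w N i)"
  by (simp add: gam_def rr_def mm_def gap_def)

context
  fixes w :: "nat \<Rightarrow> real" and N :: nat
  assumes w_pos: "0 < w N" and N_pos: "0 < N"
begin

lemma theta_gt_one: "1 < theta w N"
  using w_pos N_pos by (simp add: theta_def)

lemma gap_sq:
  assumes "1 \<le> i" "i \<le> N + 1"
  shows "(gap w N i)\<^sup>2 = 1 - (real i - 1) / (real N * (theta w N)\<^sup>2)"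
proof -
  have "(real i - 1) / (real N * (theta w N)\<^sup>2) \<le> real N / (real N * (theta w N)\<^sup>2)"
    using assms theta_gt_one by (intro divide_right_mono) auto
  also have "\<dots> \<le> 1"
    using N_pos theta_gt_one by (simp add: power_le_one_iff one_le_power)
  finally show ?thesis
    unfolding gap_def by simp
qed

lemma gap_antimono:
  assumes "i \<le> j"
  shows "gap w N j \<le> gap w N i"
  unfolding gap_def using assms N_pos theta_gt_one
  by (intro real_sqrt_le_mono diff_left_mono divide_right_mono) auto

lemma gap_last: "gap w N (N + 1) = gap_min w N"
  using N_pos by (simp add: gap_def gap_min_def)

lemma gap_min_pos: "0 < gap_min w N"
  using theta_gt_one by (simp add: gap_min_def)

lemma gap_min_le_gap: "i \<le> N + 1 \<Longrightarrow> gap_min w N \<le> gap w N i"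
  using gap_antimono gap_last by metis

lemma gap_le_one: "1 \<le> i \<Longrightarrow> gap w N i \<le> 1"
  using N_pos theta_gt_one by (simp add: gap_def)

lemma gap_sq_diff:
  assumes "1 \<le> i" "i \<le> N"
  shows "(gap w N i)\<^sup>2 - (gap w N (Suc i))\<^sup>2 = 1 / (real N * (theta w N)\<^sup>2)"
  using assms by (simp add: gap_sq diff_divide_distrib[symmetric])

lemma rr_div_eq_inverse_one_minus_gam:
  assumes "i \<le> N + 1"
  shows "rr w N i / (2 * (rr w N i - 1)) = 1 / (1 - gam w N i)"
proof -
  have "0 < gap w N i"
    using gap_min_le_gap[OF assms] gap_min_pos by linarith
  then have "1 - gam w N i = 2 * gap w N i / (1 + gap w N i)"
    by (simp add: gam_eq field_simps)
  then show ?thesis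
    unfolding rr_div_eq by simp
qed

lemma one_plus_div_double_supersolution:
  assumes \<delta>: "1 / (real N * (theta w N)\<^sup>2) / (4 * gap_min w N ^ 3) \<le> \<delta>" "\<delta> < 1"
    and l: "1 \<le> l" "l \<le> N"
  shows "1 + gam w N l * ((1 + gap w N (Suc l)) / (2 * gap w N (Suc l)) / (1 - \<delta>))
    \<le> (1 + gap w N l) / (2 * gap w N l) / (1 - \<delta>)"
proof -
  let ?s = "gap w N l" and ?s' = "gap w N (Suc l)"
  have "gap_min w N \<le> ?s'"
    using l by (intro gap_min_le_gap) simp
  then have s: "0 < ?s'" "?s' \<le> ?s" "?s \<le> 1" "gap_min w N \<le> ?s'"
    using l gap_min_pos gap_antimono[of l "Suc l"] gap_le_one[of l] by simp_all
  have "(1 + ?s') / (2 * ?s') - (1 + ?s) / (2 * ?s) \<le> (?s\<^sup>2 - ?s'\<^sup>2) / (4 * gap_min w N ^ 3)"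
    using s gap_min_pos by (intro one_plus_div_double_diff_le) auto
  also have "\<dots> \<le> \<delta>"
    using gap_sq_diff[OF l] \<delta>(1) by simp
  finally have diff: "(1 + ?s') / (2 * ?s') - (1 + ?s) / (2 * ?s) \<le> \<delta>" .
  show ?thesis
    unfolding gam_eq
  proof (rule supersolution_step)
    show "(1 + ?s) / (2 * ?s) = 1 + (1 - ?s) / (1 + ?s) * ((1 + ?s) / (2 * ?s))"
      using s by (intro one_plus_div_double_eq) simp
    show "0 \<le> (1 - ?s) / (1 + ?s)" "(1 - ?s) / (1 + ?s) \<le> 1"
      using s by auto
    show "0 \<le> (1 + ?s') / (2 * ?s') - (1 + ?s) / (2 * ?s)"
      using one_plus_div_double_antimono[OF s(1,2)] by simp
  qed (use diff \<delta>(2) in auto)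
qed

lemma gg_le_div_one_minus:
  assumes \<delta>: "1 / (real N * (theta w N)\<^sup>2) / (4 * gap_min w N ^ 3) \<le> \<delta>" "\<delta> < 1"
    and i: "1 \<le> i" "i \<le> N + 1"
  shows "gg w N i \<le> rr w N i / (2 * (rr w N i - 1)) / (1 - \<delta>)"
proof -
  let ?F = "\<lambda>l. (1 + gap w N l) / (2 * gap w N l) / (1 - \<delta>)"
  have "0 \<le> 1 / (real N * (theta w N)\<^sup>2) / (4 * gap_min w N ^ 3)"
    using gap_min_pos by simp
  then have "0 \<le> \<delta>"
    using \<delta>(1) by linarith
  have "1 \<le> ?F (N + 1)"
  proof -
    have "0 < gap w N (N + 1)" "gap w N (N + 1) \<le> 1"
      using gap_min_pos gap_last gap_le_one[of "N + 1"] by simp_all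
    then have "1 \<le> (1 + gap w N (N + 1)) / (2 * gap w N (N + 1))"
      by simp
    then have "1 - \<delta> \<le> (1 + gap w N (N + 1)) / (2 * gap w N (N + 1))"
      using \<open>0 \<le> \<delta>\<close> by linarith
    then show ?thesis
      using \<delta>(2) by (intro le_divide_eq_1_pos[THEN iffD2]) auto
  qed
  moreover have "0 \<le> gam w N l \<and> 1 + gam w N l * ?F (Suc l) \<le> ?F l" if "i \<le> l" "l < N + 1" for l
  proof
    have "0 < gap w N l" "gap w N l \<le> 1"
      using that i gap_min_le_gap[of l] gap_min_pos gap_le_one[of l] by simp_all
    then show "0 \<le> gam w N l"
      by (simp add: gam_eq)
    show "1 + gam w N l * ?F (Suc l) \<le> ?F l"
      using that i by (intro one_plus_div_double_supersolution[OF \<delta>]) auto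
  qed
  ultimately have "gg w N i \<le> ?F i"
    unfolding gg_def using i by (intro sum_prod_le_supersolution) auto
  then show ?thesis
    unfolding rr_div_eq .
qed

lemma gg_ge_mult_one_minus_exp:
  assumes i: "1 \<le> i" "i \<le> N + 1"
  shows "rr w N i / (2 * (rr w N i - 1)) * (1 - exp (- gap_min w N * real (N + 2 - i))) \<le> gg w N i"
proof -
  let ?s = "gap w N i" and ?\<gamma> = "gam w N i" and ?n = "N + 2 - i"
  have s: "gap_min w N \<le> ?s" "?s \<le> 1" "0 < ?s"
    using i gap_min_le_gap gap_le_one gap_min_pos by (auto intro: order.strict_trans2)
  then have \<gamma>: "0 \<le> ?\<gamma>" "?\<gamma> < 1"
    by (simp_all add: gam_eq)
  have "?\<gamma> \<le> gam w N l" if "i \<le> l" "l < N + 1" for l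
  proof -
    have "0 \<le> gap w N l" "gap w N l \<le> ?s"
      using that gap_min_pos gap_min_le_gap[of l] gap_antimono[OF that(1)] by simp_all
    then show ?thesis
      unfolding gam_eq by (rule one_minus_div_one_plus_antimono)
  qed
  then have geometric: "(1 - ?\<gamma> ^ ?n) / (1 - ?\<gamma>) \<le> gg w N i"
    unfolding gg_def using i \<gamma> sum_prod_ge_geometric[of i "N + 1" "gam w N"] by simp
  have "?\<gamma> ^ ?n \<le> exp (- ?s) ^ ?n"
    using \<gamma> s one_minus_div_one_plus_le_exp[of ?s] by (intro power_mono) (simp_all add: gam_eq)
  also have "\<dots> = exp (- ?s * real ?n)"
    by (simp add: exp_of_nat_mult[symmetric] mult.commute)
  also have "\<dots> \<le> exp (- gap_min w N * real ?n)"
    using s by (simp add: mult_right_mono)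
  finally have defect: "1 - exp (- gap_min w N * real ?n) \<le> 1 - ?\<gamma> ^ ?n"
    by simp
  have "rr w N i / (2 * (rr w N i - 1)) * (1 - exp (- gap_min w N * real ?n))
      \<le> 1 / (1 - ?\<gamma>) * (1 - ?\<gamma> ^ ?n)"
    unfolding rr_div_eq_inverse_one_minus_gam[OF i(2)] using \<gamma> defect
    by (intro mult_left_mono) simp_all
  also have "\<dots> = (1 - ?\<gamma> ^ ?n) / (1 - ?\<gamma>)"
    by simp
  finally show ?thesis
    using geometric by linarith
qed

lemma gap_sq_step_over_cube_le:
  "1 / (real N * (theta w N)\<^sup>2) / (4 * gap_min w N ^ 3) \<le> w N powr (-3/2) / 3"
proof -
  define x where "x = real N powr (-2/3) * w N"
  have x: "0 < x"
    using N_pos w_pos by (simp add: x_def)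
  have "x powr (-3/2) = real N * w N powr (-3/2)"
    using N_pos w_pos by (simp add: x_def powr_mult powr_powr)
  have "1 / (real N * (theta w N)\<^sup>2) / (4 * gap_min w N ^ 3)
      = 1 / real N * (1 / ((1 + x)\<^sup>2 * (4 * sqrt (1 - 1 / (1 + x)\<^sup>2) ^ 3)))"
    by (simp add: theta_def gap_min_def x_def)
  also have "\<dots> \<le> 1 / real N * (x powr (-3/2) / 3)"
    using one_plus_sq_sqrt_cube_bound[OF x] by (intro mult_left_mono) simp_all
  also have "\<dots> = w N powr (-3/2) / 3"
    using \<open>x powr (-3/2) = _\<close> N_pos by simp
  finally show ?thesis .
qed

lemma sqrt_w_le_gap_min:
  assumes "w N \<le> real N powr (2/3) / 2"
  shows "sqrt (w N) \<le> gap_min w N * real N powr (1/3)"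
proof -
  define x where "x = real N powr (-2/3) * w N"
  have "x \<le> 1/2"
    using assms N_pos by (simp add: x_def powr_minus_divide field_simps)
  then have "sqrt x \<le> gap_min w N"
    using w_pos le_one_minus_inverse_sq[of x]
    by (simp add: gap_min_def theta_def x_def real_sqrt_le_mono)
  moreover have "sqrt (w N) = sqrt x * real N powr (1/3)"
  proof -
    have "sqrt (real N powr (-2/3)) = real N powr (-1/3)"
      using powr_half_sqrt_powr[of "real N" "-2/3"] by simp
    moreover have "real N powr (-1/3) * real N powr (1/3) = 1"
      using N_pos by (simp flip: powr_add)
    ultimately show ?thesis
      by (simp add: x_def real_sqrt_mult)
  qed
  ultimately show ?thesis
    using N_pos by (simp add: mult_right_mono)
qed

lemma rr_div_pos:
  assumes "i \<le> N + 1"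
  shows "0 < rr w N i / (2 * (rr w N i - 1))"
proof -
  have "0 < gap w N i"
    using gap_min_le_gap[OF assms] gap_min_pos by linarith
  then show ?thesis
    unfolding rr_div_eq by simp
qed

lemma gg_less_mult_one_plus_w_powr:
  assumes w: "1 \<le> w N" and i: "1 \<le> i" "i \<le> N"
  shows "gg w N i < rr w N i / (2 * (rr w N i - 1)) * (1 + w N powr (-3/2))"
proof -
  define \<delta> where "\<delta> = w N powr (-3/2) / 3"
  have "1 \<le> w N powr (3/2)"
    using w by (intro ge_one_powr_ge_zero) auto
  then have \<delta>: "0 < \<delta>" "\<delta> \<le> 1/3"
    using w_pos by (simp_all add: \<delta>_def powr_minus_divide)
  have "gg w N i \<le> rr w N i / (2 * (rr w N i - 1)) / (1 - \<delta>)"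
    using gap_sq_step_over_cube_le \<delta> i unfolding \<delta>_def by (intro gg_le_div_one_minus) auto
  also have "\<dots> < rr w N i / (2 * (rr w N i - 1)) * (1 + 3 * \<delta>)"
  proof -
    have "1 < (1 + 3 * \<delta>) * (1 - \<delta>)"
      using \<delta> by (simp add: algebra_simps)
    then have "1 / (1 - \<delta>) < 1 + 3 * \<delta>"
      using \<delta> by (simp add: divide_less_eq)
    then have "rr w N i / (2 * (rr w N i - 1)) * (1 / (1 - \<delta>))
        < rr w N i / (2 * (rr w N i - 1)) * (1 + 3 * \<delta>)"
      using rr_div_pos[of i] i by (intro mult_strict_left_mono) simp_all
    then show ?thesis
      by simp
  qed
  finally show ?thesis
    by (simp add: \<delta>_def)
qed

lemma gg_greater_mult_one_minus_ln_powr: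
  assumes w: "w N \<le> real N powr (2/3) / 2" and k: "k * ln (ln (real N)) < sqrt (w N)"
    and i: "1 \<le> i" "real i \<le> real N - real N powr (1/3)"
  shows "rr w N i / (2 * (rr w N i - 1)) * (1 - ln (real N) powr (-k)) < gg w N i"
proof -
  have "0 < real N powr (1/3)"
    using N_pos by simp
  then have "1 < N" "i \<le> N"
    using i by linarith+
  have "sqrt (w N) \<le> gap_min w N * real N powr (1/3)"
    using w by (rule sqrt_w_le_gap_min)
  also have "\<dots> \<le> gap_min w N * real (N + 2 - i)"
    using i \<open>i \<le> N\<close> gap_min_pos by (intro mult_left_mono) (simp_all add: of_nat_diff)
  finally have "exp (- gap_min w N * real (N + 2 - i)) \<le> exp (- sqrt (w N))"
    by simp
  also have "\<dots> < exp (- k * ln (ln (real N)))"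
    using k by simp
  also have "\<dots> = ln (real N) powr (-k)"
    using \<open>1 < N\<close> by (simp add: powr_def)
  finally have "1 - ln (real N) powr (-k) < 1 - exp (- gap_min w N * real (N + 2 - i))"
    by simp
  then have "rr w N i / (2 * (rr w N i - 1)) * (1 - ln (real N) powr (-k))
      < rr w N i / (2 * (rr w N i - 1)) * (1 - exp (- gap_min w N * real (N + 2 - i)))"
    using rr_div_pos[of i] i \<open>i \<le> N\<close> by (intro mult_strict_left_mono) simp_all
  also have "\<dots> \<le> gg w N i"
    using i \<open>i \<le> N\<close> by (intro gg_ge_mult_one_minus_exp) simp_all
  finally show ?thesis .
qed

end

lemma eventually_mult_less_of_ratio_tendsto_zero:
  fixes a b :: "'a \<Rightarrow> real"
  assumes "((\<lambda>x. a x / b x) \<longlongrightarrow> 0) F" "eventually (\<lambda>x. 0 < b x) F" "0 < c"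
  shows "eventually (\<lambda>x. c * a x < b x) F"
proof -
  have "eventually (\<lambda>x. a x / b x < 1 / c) F"
    using assms(1) by (rule order_tendstoD(2)) (use assms(3) in simp)
  with assms(2) show ?thesis
  proof eventually_elim
    case (elim x)
    then show ?case
      using assms(3) by (simp add: divide_less_eq field_simps)
  qed
qed

lemma eventually_gg_less:
  fixes w :: "nat \<Rightarrow> real"
  assumes wpos: "\<And>N. 0 < w N"
    and lim: "(\<lambda>N. (ln (ln (real N)))\<^sup>2 / w N) \<longlonglongrightarrow> 0"
  shows "\<forall>\<^sub>F N in sequentially. \<forall>i. 3 \<le> i \<and> i \<le> N \<longrightarrow>
    gg w N i < rr w N i / (2 * (rr w N i - 1)) * (1 + w N powr (-3/2))"
proof -
  have "\<forall>\<^sub>F N in sequentially. 1 \<le> ln (ln (real N))"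
    by real_asymp
  moreover have "\<forall>\<^sub>F N in sequentially. 1 * (ln (ln (real N)))\<^sup>2 < w N"
    using lim wpos by (intro eventually_mult_less_of_ratio_tendsto_zero) auto
  ultimately show ?thesis
    using eventually_gt_at_top[of 0]
  proof eventually_elim
    case (elim N)
    then have "1 \<le> (ln (ln (real N)))\<^sup>2"
      by (simp add: one_le_power)
    then have "1 \<le> w N"
      using elim by linarith
    then show ?case
      using elim wpos by (intro allI impI gg_less_mult_one_plus_w_powr) auto
  qed
qed

lemma eventually_gg_greater:
  fixes w :: "nat \<Rightarrow> real"
  assumes wpos: "\<And>N. 0 < w N"
    and lim1: "(\<lambda>N. (ln (ln (real N)))\<^sup>2 / w N) \<longlonglongrightarrow> 0"
    and lim2: "(\<lambda>N. w N / (ln (real N))\<^sup>2) \<longlonglongrightarrow> 0"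
    and k: "0 < k"
  shows "\<forall>\<^sub>F N in sequentially. \<forall>i. 3 \<le> i \<and> real i \<le> real N - real N powr (1/3) \<longrightarrow>
    gg w N i > rr w N i / (2 * (rr w N i - 1)) * (1 - ln (real N) powr (-k))"
proof -
  have "\<forall>\<^sub>F N in sequentially. k\<^sup>2 * (ln (ln (real N)))\<^sup>2 < w N"
    using lim1 wpos k by (intro eventually_mult_less_of_ratio_tendsto_zero) auto
  moreover have "\<forall>\<^sub>F N in sequentially. 1 * w N < (ln (real N))\<^sup>2"
    using lim2 by (rule eventually_mult_less_of_ratio_tendsto_zero) (real_asymp, simp)
  moreover have "\<forall>\<^sub>F N in sequentially. (ln (real N))\<^sup>2 \<le> real N powr (2/3) / 2"
    by real_asymp
  ultimately show ?thesis
    using eventually_gt_at_top[of 0]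
  proof eventually_elim
    case (elim N)
    have "k * ln (ln (real N)) \<le> sqrt ((k * ln (ln (real N)))\<^sup>2)"
      by simp
    also have "\<dots> < sqrt (w N)"
      using elim by (simp add: power_mult_distrib)
    finally have "k * ln (ln (real N)) < sqrt (w N)" .
    then show ?case
      using elim wpos by (intro allI impI gg_greater_mult_one_minus_ln_powr) auto
  qed
qed

theorem lemma3:
  fixes w :: "nat \<Rightarrow> real"
  assumes wpos: "\<And>N. w N > 0"
    and lim1: "(\<lambda>N. (ln (ln (real N)))^2 / w N) \<longlonglongrightarrow> 0"
    and lim2: "(\<lambda>N. w N / (ln (real N))^2) \<longlonglongrightarrow> 0"
  shows "(\<forall>k::real. k > 0 \<longrightarrow>
            (\<forall>\<^sub>F N in sequentially. \<forall>i::nat. 3 \<le> i \<and> real i \<le> real N - real N powr (1/3) \<longrightarrow>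
               gg w N i > rr w N i / (2 * (rr w N i - 1)) * (1 - ln (real N) powr (-k))))
       \<and> (\<forall>\<^sub>F N in sequentially. \<forall>i::nat. 3 \<le> i \<and> i \<le> N \<longrightarrow>
               gg w N i < rr w N i / (2 * (rr w N i - 1)) * (1 + w N powr (-3/2)))"
  using eventually_gg_greater[OF wpos lim1 lim2] eventually_gg_less[OF wpos lim1] by blast

end
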